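(* Let $f\ge 0$, $n=3f+1$, and let nodes $v_0,\dots,v_{n-1}$ be given, of which exactly $f$ are byzantine and the remaining $2f+1$ honest. Let the creator of round $r\in\mathbb{Z}_{\ge 0}$ be $v_{r\bmod n}$. Then among any $n+2$ consecutive rounds there exist three consecutive rounds whose creators are all honest. *)

theory Defs
  imports Main
begin

text \<open>Nodes are identified with indices 0..n-1; the creator of round r is node (r mod n).\<close>
definition creator :: "nat \<Rightarrow> nat \<Rightarrow> nat" where
  "creator n r = r mod n"

end

theory Submission
  imports Defs
begin

text \<open>Fix a window of \<open>n\<close> consecutive start rounds. For each shift \<open>i\<close>, the map
  \<open>r \<mapsto> (r + i) mod n\<close> is injective on the window, so at most \<open>card Byz = f\<close> start rounds
  \<open>r\<close> have a byzantine creator at round \<open>r + i\<close>. Hence at most \<open>3f < n\<close> start rounds are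
  spoiled by one of the shifts \<open>0, 1, 2\<close>, and some start round in the window begins three
  consecutive honest rounds.\<close>

lemma inj_on_add_mod_interval:
  fixes s i n :: nat
  shows "inj_on (\<lambda>r. (r + i) mod n) {s..<s + n}"
proof -
  have no_collision: False
    if "a < b" "b < s + n" "s \<le> a" "(a + i) mod n = (b + i) mod n" for a b
  proof -
    have "n dvd b - a"
      using that mod_eq_dvd_iff_nat[of "a + i" "b + i" n] by simp
    moreover have "0 < b - a" "b - a < n" using that by auto
    ultimately show False by (simp add: nat_dvd_not_less)
  qed
  show ?thesis
    by (rule inj_onI) (metis atLeastLessThan_iff linorder_neqE_nat no_collision)
qed

lemma card_interval_add_mod_in_le:
  fixes s i n :: nat and B :: "nat set"
  assumes "finite B"
  shows "card {r \<in> {s..<s + n}. (r + i) mod n \<in> B} \<le> card B"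
  by (rule card_inj_on_le[OF inj_on_subset[OF inj_on_add_mod_interval] _ assms]) auto

lemma card_interval_add_mod_some_in_le:
  fixes s k n :: nat and B :: "nat set"
  assumes "finite B"
  shows "card {r \<in> {s..<s + n}. \<exists>i<k. (r + i) mod n \<in> B} \<le> k * card B"
proof -
  have "{r \<in> {s..<s + n}. \<exists>i<k. (r + i) mod n \<in> B}
      = (\<Union>i<k. {r \<in> {s..<s + n}. (r + i) mod n \<in> B})" by auto
  also have "card \<dots> \<le> (\<Sum>i<k. card {r \<in> {s..<s + n}. (r + i) mod n \<in> B})"
    by (rule card_UN_le) simp
  also have "\<dots> \<le> (\<Sum>i<k. card B)"
    by (rule sum_mono) (rule card_interval_add_mod_in_le[OF assms])
  finally show ?thesis by simp
qed

lemma ex_interval_add_mod_all_notin: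
  fixes s k n :: nat and B :: "nat set"
  assumes "finite B" and "k * card B < n"
  shows "\<exists>r \<in> {s..<s + n}. \<forall>i<k. (r + i) mod n \<notin> B"
proof (rule ccontr)
  assume "\<not> ?thesis"
  then have "{s..<s + n} = {r \<in> {s..<s + n}. \<exists>i<k. (r + i) mod n \<in> B}" by auto
  then have "card {s..<s + n} \<le> k * card B"
    using card_interval_add_mod_some_in_le[OF assms(1), of s n k] by simp
  with assms(2) show False by simp
qed

theorem lemma12:
  fixes f n :: nat and Byz :: "nat set" and s :: nat
  assumes "n = 3 * f + 1"
    and "Byz \<subseteq> {0..<n}"
    and "card Byz = f"
  shows "\<exists>r. s \<le> r \<and> r + 2 \<le> s + (n + 2) - 1 \<and>
           (\<forall>i\<le>2. creator n (r + i) \<notin> Byz)"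
proof -
  have "finite Byz" using assms(2) finite_subset by blast
  moreover have "3 * card Byz < n" using assms(1,3) by simp
  ultimately obtain r where "r \<in> {s..<s + n}" and "\<forall>i<3. (r + i) mod n \<notin> Byz"
    using ex_interval_add_mod_all_notin by blast
  then show ?thesis
    unfolding creator_def by (intro exI[of _ r]) auto
qed

end
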